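(* Let $\mathcal{H}$ be finite and let $D$ consist of $n$ i.i.d. samples from $\mathcal{D}$. With probability $1-\delta$, for all $f\in\Delta(\mathcal{H})$ and all $\lambda\in\Lambda_C$, $|\mathcal{L}_{\mathcal{D}}(f,\lambda)-\mathcal{L}_D(f,\lambda)|\le\sqrt{\frac{\ln(4|\mathcal{H}|/\delta)}{2n}}+C\sqrt{\frac{8\ln(4|\mathcal{H}|Ndm/\delta)}{n}}.$
   Context: Data $(x,y)\in\mathcal{X}\times[-1,1]^d$ drawn from $\mathcal{D}$; $\mathcal{H}$ a class of functions $h:\mathcal{X}\to[-1,1]^d$. Receivers $i\in[N]$ have finite action sets $\mathcal{A}_i$, $|\mathcal{A}_i|=m$, utilities $v_i:\mathcal{A}_i\times[-1,1]^d\to[0,1]$; $b_i(z,a)=1$ if $a=\arg\max_{a'}v_i(a',z)$ (fixed tie-breaking), else $0$; $b(z,\mathbf a)=\prod_ib_i(z,a_i)$, $\mathcal{A}=\prod_i\mathcal{A}_i$; sender utility $u:\mathcal{A}\times[-1,1]^d\to[0,1]$; $\gamma\ge0$. $I=\{(s,i,j,a):s\in\{\pm1\},i\in[N],j\in[d],a\in\mathcal{A}_i\}$, $\Lambda_C=\{\lambda\in\mathbb{R}_{\ge0}^I:\|\lambda\|_1\le C\}$. For a distribution $P$ (either $\mathcal{D}$ or the empirical distribution of $D$), $\mathcal{L}_P(f,\lambda)=-\mathbb{E}_{h\sim f}\mathbb{E}_P[\sum_{\mathbf a}u(\mathbf a,y)b(h(x),\mathbf a)]+\sum_{(s,i,j,a)\in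 I}\lambda_{s,i,j,a}\,s\big(\mathbb{E}_{h\sim f}\mathbb{E}_P[(h(x)_j-y_j)b_i(h(x),a)]-\gamma\big)$. *)

theory Defs
  imports "HOL-Probability.Probability"
begin

text \<open>Points z, y live in real^'d, so d = CARD('d); coordinates j range over 'd.
  Receivers are i < N, with action sets A i.  Fixed tie-breaking is modelled by a
  best-response function br: br i z is the (tie-broken) argmax of v i (-) z over A i.\<close>

definition in_cube :: "real^'d \<Rightarrow> bool" where
  "in_cube z \<longleftrightarrow> (\<forall>j. \<bar>z $ j\<bar> \<le> 1)"

definition bi :: "(nat \<Rightarrow> real^'d \<Rightarrow> 'a) \<Rightarrow> nat \<Rightarrow> real^'d \<Rightarrow> 'a \<Rightarrow> real" where
  "bi br i z a = (if a = br i z then 1 else 0)"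

definition bprof :: "nat \<Rightarrow> (nat \<Rightarrow> real^'d \<Rightarrow> 'a) \<Rightarrow> real^'d \<Rightarrow> (nat \<Rightarrow> 'a) \<Rightarrow> real" where
  "bprof N br z a = (\<Prod>i<N. bi br i z (a i))"

definition Iset :: "nat \<Rightarrow> (nat \<Rightarrow> 'a set) \<Rightarrow> (int \<times> nat \<times> 'd \<times> 'a) set" where
  "Iset N A = {(s, i, j, a). s \<in> {-1, 1} \<and> i < N \<and> a \<in> A i}"

definition LambdaC :: "nat \<Rightarrow> (nat \<Rightarrow> 'a set) \<Rightarrow> real \<Rightarrow> ((int \<times> nat \<times> 'd \<times> 'a) \<Rightarrow> real) set" where
  "LambdaC N A C = {lam. (\<forall>t\<in>Iset N A. lam t \<ge> 0) \<and> (\<Sum>t\<in>Iset N A. \<bar>lam t\<bar>) \<le> C}"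

definition Delta :: "'h set \<Rightarrow> ('h \<Rightarrow> real) set" where
  "Delta H = {f. (\<forall>h\<in>H. f h \<ge> 0) \<and> (\<Sum>h\<in>H. f h) = 1}"

text \<open>Lagrangian L_P(f,lambda), where P is given by its expectation operator E.\<close>
definition Lag ::
  "((('x \<times> (real^'d)) \<Rightarrow> real) \<Rightarrow> real) \<Rightarrow> ('x \<Rightarrow> real^'d) set \<Rightarrow> nat \<Rightarrow> (nat \<Rightarrow> 'a set)
   \<Rightarrow> (nat \<Rightarrow> real^'d \<Rightarrow> 'a) \<Rightarrow> ((nat \<Rightarrow> 'a) \<Rightarrow> real^'d \<Rightarrow> real) \<Rightarrow> real
   \<Rightarrow> (('x \<Rightarrow> real^'d) \<Rightarrow> real) \<Rightarrow> ((int \<times> nat \<times> 'd \<times> 'a) \<Rightarrow> real) \<Rightarrow> real" where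
  "Lag E H N A br u \<gamma> f lam =
     - (\<Sum>h\<in>H. f h * E (\<lambda>p. \<Sum>a\<in>PiE {..<N} A. u a (snd p) * bprof N br (h (fst p)) a))
     + (\<Sum>(s, i, j, a)\<in>Iset N A. lam (s, i, j, a) * of_int s *
          ((\<Sum>h\<in>H. f h * E (\<lambda>p. (h (fst p) $ j - snd p $ j) * bi br i (h (fst p)) a)) - \<gamma>))"

definition emp_E :: "nat \<Rightarrow> (nat \<Rightarrow> 'z) \<Rightarrow> ('z \<Rightarrow> real) \<Rightarrow> real" where
  "emp_E n S g = (\<Sum>k<n. g (S k)) / real n"

end

theory Submission
  imports Defs
begin

(* L_P(f, lambda) is affine in the finitely many expectations E_P[payoff of h] (h in H) and
   E_P[(h(x)_j - y_j) b_i(h(x), a)], with weights f in Delta(H) and lambda in Lambda_C; so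
   the gap between the population and the empirical Lagrangian is at most the largest payoff
   deviation plus C times the largest bias deviation.
   The payoff integrand lies in [0, 1], because exactly one action profile is the best response,
   and the bias integrand lies in [-2, 2].  Hoeffding's inequality together with a union bound
   over the |H| resp. |H| N d m integrands, each family at confidence delta/2, gives the radii. *)

lemma (in product_prob_space) indep_vars_coordinates:
  assumes "I \<noteq> {}"
  shows "P.indep_vars M (\<lambda>i \<omega>. \<omega> i) I"
proof (subst P.indep_vars_iff_distr_eq_PiM'[OF assms])
  have "distr (PiM I M) (PiM I M) (\<lambda>\<omega>. restrict \<omega> I) = distr (PiM I M) (PiM I M) (\<lambda>\<omega>. \<omega>)"
    by (intro distr_cong) (auto simp: space_PiM)
  also have "\<dots> = PiM I M"
    by simp
  also have "\<dots> = PiM I (\<lambda>i. distr (PiM I M) (M i) (\<lambda>\<omega>. \<omega> i))"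
    by (intro PiM_cong refl) (simp add: PiM_component)
  finally show "distr (PiM I M) (PiM I M) (\<lambda>\<omega>. \<lambda>i\<in>I. \<omega> i) = PiM I (\<lambda>i. distr (PiM I M) (M i) (\<lambda>\<omega>. \<omega> i))" .
qed auto

lemma Hoeffding_emp_E_abs_ge:
  fixes g :: "'z \<Rightarrow> real"
  assumes M: "prob_space M" and g: "g \<in> borel_measurable M"
    and g_range: "\<forall>p\<in>space M. lo \<le> g p \<and> g p \<le> hi" and "lo < hi" and n: "n > 0" and "t \<ge> 0"
  shows "measure (PiM {..<n} (\<lambda>_. M))
           {S\<in>space (PiM {..<n} (\<lambda>_. M)). t \<le> \<bar>emp_E n S g - integral\<^sup>L M g\<bar>}
         \<le> 2 * exp (- 2 * real n * t\<^sup>2 / (hi - lo)\<^sup>2)"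
proof -
  interpret product_prob_space "\<lambda>_. M" "{..<n}"
    by (simp add: M product_prob_space.intro product_sigma_finite.intro
        prob_space_imp_sigma_finite product_prob_space_axioms.intro)
  have coordinate_distr: "distr (PiM {..<n} (\<lambda>_. M)) borel (\<lambda>S. g (S k)) = distr M borel g"
    if "k < n" for k
  proof -
    have "distr (PiM {..<n} (\<lambda>_. M)) borel (\<lambda>S. g (S k))
        = distr (distr (PiM {..<n} (\<lambda>_. M)) M (\<lambda>S. S k)) borel g"
      using that g by (subst distr_distr) (auto simp: comp_def)
    then show ?thesis
      using that by (simp add: PiM_component)
  qed
  have expectation: "P.expectation (\<lambda>S. g (S 0)) = integral\<^sup>L M g"
    using n g by (subst PiM_component[of 0, symmetric]) (auto simp: integral_distr)
  interpret Hoeffding_ineq_iid "PiM {..<n} (\<lambda>_. M)" "{..<n}" "\<lambda>k S. g (S k)" "\<lambda>S. g (S 0)"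
    lo hi "integral\<^sup>L M g"
  proof unfold_locales
    show "P.indep_vars (\<lambda>_. borel) (\<lambda>k S. g (S k)) {..<n}"
      using n g by (intro P.indep_vars_compose2[OF indep_vars_coordinates]) auto
    show "AE S in PiM {..<n} (\<lambda>_. M). g (S 0) \<in> {lo..hi}"
      using n g_range by (intro AE_I2) (auto simp: space_PiM)
    show "integral\<^sup>L M g \<equiv> P.expectation (\<lambda>S. g (S 0))"
      by (simp add: expectation)
  qed (use n g coordinate_distr in auto)
  have "{..<n} \<noteq> {}"
    using n by auto
  from Hoeffding_ineq_abs_ge'[OF \<open>t \<ge> 0\<close> \<open>lo < hi\<close> this] show ?thesis
    by (simp add: emp_E_def)
qed

lemma sets_emp_E_deviation:
  fixes g :: "'z \<Rightarrow> real"
  assumes "g \<in> borel_measurable M"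
  shows "{S\<in>space (PiM {..<n} (\<lambda>_. M)). t \<le> \<bar>emp_E n S g - c\<bar>} \<in> sets (PiM {..<n} (\<lambda>_. M))"
proof -
  have "(\<lambda>S. g (S k)) \<in> borel_measurable (PiM {..<n} (\<lambda>_. M))" if "k < n" for k
    using assms that by (intro measurable_compose[OF measurable_component_singleton]) auto
  then have "(\<lambda>S. emp_E n S g) \<in> borel_measurable (PiM {..<n} (\<lambda>_. M))"
    unfolding emp_E_def by (intro borel_measurable_divide borel_measurable_sum) auto
  then show ?thesis
    by measurable
qed

lemma ln_mult_of_nat_div_nonneg:
  fixes c \<delta> :: real
  assumes "0 < \<delta>" "\<delta> \<le> c"
  shows "0 \<le> ln (c * real k / \<delta>)"
proof (cases "k = 0")
  case False
  then have "c * 1 \<le> c * real k"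
    using assms by (intro mult_left_mono) auto
  then have "\<delta> \<le> c * real k"
    using assms by linarith
  then show ?thesis
    using assms by simp
qed simp

lemma (in prob_space) prob_Int_ge:
  assumes "A \<in> events" "B \<in> events"
  shows "prob A + prob B - 1 \<le> prob (A \<inter> B)"
  using measure_Un3[of A M B] assms prob_le_1[of "A \<union> B"] by (simp add: fmeasurable_eq_sets)

lemma uniform_emp_E_deviation:
  fixes g :: "'k \<Rightarrow> 'z \<Rightarrow> real"
  assumes M: "prob_space M" and K: "finite K"
    and g: "\<forall>k\<in>K. g k \<in> borel_measurable M"
    and g_range: "\<forall>k\<in>K. \<forall>p\<in>space M. lo \<le> g k p \<and> g k p \<le> hi"
    and "lo < hi" and n: "n > 0" and \<delta>: "0 < \<delta>" "\<delta> \<le> 2"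
  shows "\<exists>E\<in>sets (PiM {..<n} (\<lambda>_. M)). 1 - \<delta> \<le> measure (PiM {..<n} (\<lambda>_. M)) E \<and>
           (\<forall>S\<in>E. \<forall>k\<in>K. \<bar>integral\<^sup>L M (g k) - emp_E n S (g k)\<bar>
              \<le> (hi - lo) * sqrt (ln (2 * real (card K) / \<delta>) / (2 * real n)))"
proof -
  interpret product_prob_space "\<lambda>_. M" "{..<n}"
    by (simp add: M product_prob_space.intro product_sigma_finite.intro
        prob_space_imp_sigma_finite product_prob_space_axioms.intro)
  define L where "L = 2 * real (card K) / \<delta>"
  define t where "t = (hi - lo) * sqrt (ln L / (2 * real n))"
  define B where "B k = {S\<in>space (PiM {..<n} (\<lambda>_. M)). t \<le> \<bar>emp_E n S (g k) - integral\<^sup>L M (g k)\<bar>}"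
    for k
  define E where "E = space (PiM {..<n} (\<lambda>_. M)) - (\<Union>k\<in>K. B k)"
  have B_sets: "B k \<in> P.events" if "k \<in> K" for k
    unfolding B_def using g that by (intro sets_emp_E_deviation) auto
  have ln_L: "0 \<le> ln L"
    unfolding L_def using \<delta> by (rule ln_mult_of_nat_div_nonneg)
  have B_prob: "P.prob (B k) \<le> \<delta> / real (card K)" if k: "k \<in> K" for k
  proof -
    have "card K \<noteq> 0"
      using K k by auto
    then have L_pos: "0 < L"
      unfolding L_def using \<delta> by simp
    have "0 \<le> t"
      unfolding t_def using ln_L \<open>lo < hi\<close> by simp
    then have "P.prob (B k) \<le> 2 * exp (- 2 * real n * t\<^sup>2 / (hi - lo)\<^sup>2)"
      unfolding B_def using M g g_range k \<open>lo < hi\<close> n by (intro Hoeffding_emp_E_abs_ge) auto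
    also have "- 2 * real n * t\<^sup>2 / (hi - lo)\<^sup>2 = - ln L"
      unfolding t_def using ln_L n \<open>lo < hi\<close> by (simp add: power_mult_distrib)
    also have "2 * exp (- ln L) = \<delta> / real (card K)"
      using L_pos \<delta> \<open>card K \<noteq> 0\<close> by (simp add: exp_minus L_def)
    finally show ?thesis .
  qed
  have "P.prob (\<Union>k\<in>K. B k) \<le> (\<Sum>k\<in>K. P.prob (B k))"
    using K B_sets by (intro measure_UNION_le) auto
  also have "\<dots> \<le> (\<Sum>k\<in>K. \<delta> / real (card K))"
    using B_prob by (rule sum_mono)
  also have "\<dots> \<le> \<delta>"
    using \<delta> by (cases "card K = 0") auto
  finally have "1 - \<delta> \<le> P.prob E"
    unfolding E_def using K B_sets by (subst P.prob_compl) auto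
  moreover have "E \<in> P.events"
    unfolding E_def using K B_sets by auto
  moreover have "\<bar>integral\<^sup>L M (g k) - emp_E n S (g k)\<bar> \<le> t" if "S \<in> E" "k \<in> K" for S k
    using that by (auto simp: E_def B_def abs_minus_commute)
  ultimately show ?thesis
    unfolding t_def L_def by blast
qed

definition sender_payoff ::
  "nat \<Rightarrow> (nat \<Rightarrow> 'a set) \<Rightarrow> (nat \<Rightarrow> real^'d \<Rightarrow> 'a) \<Rightarrow> ((nat \<Rightarrow> 'a) \<Rightarrow> real^'d \<Rightarrow> real)
   \<Rightarrow> ('x \<Rightarrow> real^'d) \<Rightarrow> 'x \<times> (real^'d) \<Rightarrow> real" where
  "sender_payoff N A br u h = (\<lambda>p. \<Sum>a\<in>PiE {..<N} A. u a (snd p) * bprof N br (h (fst p)) a)"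

definition conditional_bias ::
  "(nat \<Rightarrow> real^'d \<Rightarrow> 'a) \<Rightarrow> nat \<Rightarrow> 'd \<Rightarrow> 'a \<Rightarrow> ('x \<Rightarrow> real^'d) \<Rightarrow> 'x \<times> (real^'d) \<Rightarrow> real" where
  "conditional_bias br i j a h = (\<lambda>p. (h (fst p) $ j - snd p $ j) * bi br i (h (fst p)) a)"

lemma abs_sum_mult_le:
  fixes w x :: "'i \<Rightarrow> real"
  assumes "\<forall>i\<in>I. \<bar>x i\<bar> \<le> b"
  shows "\<bar>\<Sum>i\<in>I. w i * x i\<bar> \<le> (\<Sum>i\<in>I. \<bar>w i\<bar>) * b"
proof -
  have "\<bar>\<Sum>i\<in>I. w i * x i\<bar> \<le> (\<Sum>i\<in>I. \<bar>w i\<bar> * \<bar>x i\<bar>)"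
    unfolding abs_mult[symmetric] by (rule sum_abs)
  also have "\<dots> \<le> (\<Sum>i\<in>I. \<bar>w i\<bar> * b)"
    using assms by (intro sum_mono mult_left_mono) auto
  finally show ?thesis
    by (simp add: sum_distrib_right)
qed

lemma Lag_eq:
  "Lag E H N A br u \<gamma> f lam =
     - (\<Sum>h\<in>H. f h * E (sender_payoff N A br u h))
     + (\<Sum>(s, i, j, a)\<in>Iset N A. lam (s, i, j, a) * of_int s *
          ((\<Sum>h\<in>H. f h * E (conditional_bias br i j a h)) - \<gamma>))"
  unfolding Lag_def sender_payoff_def conditional_bias_def ..

lemma Lag_diff_eq:
  "Lag E1 H N A br u \<gamma> f lam - Lag E2 H N A br u \<gamma> f lam =
     - (\<Sum>h\<in>H. f h * (E1 (sender_payoff N A br u h) - E2 (sender_payoff N A br u h)))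
     + (\<Sum>t\<in>Iset N A. lam t * (case t of (s, i, j, a) \<Rightarrow> of_int s *
          (\<Sum>h\<in>H. f h * (E1 (conditional_bias br i j a h) - E2 (conditional_bias br i j a h)))))"
proof -
  have "(\<Sum>t\<in>Iset N A. lam t * (case t of (s, i, j, a) \<Rightarrow> of_int s *
          (\<Sum>h\<in>H. f h * (E1 (conditional_bias br i j a h) - E2 (conditional_bias br i j a h)))))
      = (\<Sum>(s, i, j, a)\<in>Iset N A. lam (s, i, j, a) * of_int s *
          ((\<Sum>h\<in>H. f h * E1 (conditional_bias br i j a h)) - \<gamma>))
      - (\<Sum>(s, i, j, a)\<in>Iset N A. lam (s, i, j, a) * of_int s *
          ((\<Sum>h\<in>H. f h * E2 (conditional_bias br i j a h)) - \<gamma>))"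
    unfolding sum_subtractf[symmetric]
  proof (rule sum.cong[OF refl], clarify)
    fix s i j a
    show "lam (s, i, j, a) * (of_int s *
          (\<Sum>h\<in>H. f h * (E1 (conditional_bias br i j a h) - E2 (conditional_bias br i j a h))))
      = lam (s, i, j, a) * of_int s * ((\<Sum>h\<in>H. f h * E1 (conditional_bias br i j a h)) - \<gamma>)
      - lam (s, i, j, a) * of_int s * ((\<Sum>h\<in>H. f h * E2 (conditional_bias br i j a h)) - \<gamma>)"
      by (simp add: right_diff_distrib sum_subtractf)
  qed
  moreover have "(\<Sum>h\<in>H. f h * (E1 (sender_payoff N A br u h) - E2 (sender_payoff N A br u h)))
      = (\<Sum>h\<in>H. f h * E1 (sender_payoff N A br u h)) - (\<Sum>h\<in>H. f h * E2 (sender_payoff N A br u h))"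
    by (simp add: right_diff_distrib sum_subtractf)
  ultimately show ?thesis
    unfolding Lag_eq by linarith
qed

lemma Lag_diff_le:
  assumes f: "f \<in> Delta H" and lam: "lam \<in> LambdaC N A C" and "0 \<le> t2"
    and payoff: "\<forall>h\<in>H. \<bar>E1 (sender_payoff N A br u h) - E2 (sender_payoff N A br u h)\<bar> \<le> t1"
    and bias: "\<forall>h\<in>H. \<forall>i<N. \<forall>a\<in>A i. \<forall>j.
                 \<bar>E1 (conditional_bias br i j a h) - E2 (conditional_bias br i j a h)\<bar> \<le> t2"
  shows "\<bar>Lag E1 H N A br u \<gamma> f lam - Lag E2 H N A br u \<gamma> f lam\<bar> \<le> t1 + C * t2"
proof -
  have f_abs: "(\<Sum>h\<in>H. \<bar>f h\<bar>) = 1"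
    using f by (simp add: Delta_def)
  have lam_abs: "(\<Sum>t\<in>Iset N A. \<bar>lam t\<bar>) \<le> C"
    using lam unfolding LambdaC_def by blast
  have "\<bar>\<Sum>h\<in>H. f h * (E1 (sender_payoff N A br u h) - E2 (sender_payoff N A br u h))\<bar> \<le> t1"
    using abs_sum_mult_le[OF payoff, of f] f_abs by simp
  moreover have "\<bar>\<Sum>t\<in>Iset N A. lam t * (case t of (s, i, j, a) \<Rightarrow> of_int s *
          (\<Sum>h\<in>H. f h * (E1 (conditional_bias br i j a h) - E2 (conditional_bias br i j a h))))\<bar>
      \<le> C * t2"
  proof -
    have "\<bar>of_int s * (\<Sum>h\<in>H. f h * (E1 (conditional_bias br i j a h) - E2 (conditional_bias br i j a h)))\<bar>
        \<le> t2" if "(s, i, j, a) \<in> Iset N A" for s i j a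
    proof -
      have "\<bar>of_int s :: real\<bar> = 1" "i < N" "a \<in> A i"
        using that by (auto simp: Iset_def)
      then show ?thesis
        using abs_sum_mult_le[of H "\<lambda>h. E1 (conditional_bias br i j a h) - E2 (conditional_bias br i j a h)" t2 f]
          bias f_abs by (simp add: abs_mult)
    qed
    then have "\<bar>\<Sum>t\<in>Iset N A. lam t * (case t of (s, i, j, a) \<Rightarrow> of_int s *
          (\<Sum>h\<in>H. f h * (E1 (conditional_bias br i j a h) - E2 (conditional_bias br i j a h))))\<bar>
        \<le> (\<Sum>t\<in>Iset N A. \<bar>lam t\<bar>) * t2"
      by (intro abs_sum_mult_le) auto
    also have "\<dots> \<le> C * t2"
      using lam_abs \<open>0 \<le> t2\<close> by (rule mult_right_mono)
    finally show ?thesis .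
  qed
  ultimately show ?thesis
    unfolding Lag_diff_eq by linarith
qed

lemma sender_payoff_eq_best_response:
  assumes "\<forall>i<N. finite (A i)" "\<forall>i<N. br i (h (fst p)) \<in> A i"
  shows "sender_payoff N A br u h p = u (restrict (\<lambda>i. br i (h (fst p))) {..<N}) (snd p)"
proof -
  define a0 where "a0 = restrict (\<lambda>i. br i (h (fst p))) {..<N}"
  have "bprof N br (h (fst p)) a = (if a = a0 then 1 else 0)" if "a \<in> PiE {..<N} A" for a
  proof -
    have "a = a0 \<longleftrightarrow> (\<forall>i<N. a i = br i (h (fst p)))"
      using that by (auto simp: a0_def PiE_def extensional_def fun_eq_iff)
    then show ?thesis
      by (auto simp: bprof_def bi_def intro: prod_zero)
  qed
  then have "sender_payoff N A br u h p = (\<Sum>a\<in>PiE {..<N} A. if a = a0 then u a (snd p) else 0)"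
    unfolding sender_payoff_def by (intro sum.cong) auto
  also have "\<dots> = u a0 (snd p)"
    using assms by (subst sum.delta) (auto simp: a0_def intro!: finite_PiE)
  finally show ?thesis
    by (simp add: a0_def)
qed

lemma abs_conditional_bias_le:
  assumes "in_cube (h (fst p))" "in_cube (snd p)"
  shows "\<bar>conditional_bias br i j a h p\<bar> \<le> 2"
proof -
  have "\<bar>h (fst p) $ j\<bar> \<le> 1" "\<bar>snd p $ j\<bar> \<le> 1"
    using assms by (auto simp: in_cube_def)
  then have "\<bar>h (fst p) $ j - snd p $ j\<bar> \<le> 2"
    by linarith
  then show ?thesis
    by (simp add: conditional_bias_def bi_def)
qed

lemma sender_payoff_range:
  assumes "\<forall>i<N. finite (A i)" "\<forall>i<N. br i (h (fst p)) \<in> A i"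
    and "\<forall>a\<in>PiE {..<N} A. 0 \<le> u a (snd p) \<and> u a (snd p) \<le> 1"
  shows "0 \<le> sender_payoff N A br u h p \<and> sender_payoff N A br u h p \<le> 1"
proof -
  have "restrict (\<lambda>i. br i (h (fst p))) {..<N} \<in> PiE {..<N} A"
    using assms(2) by simp
  then show ?thesis
    using assms(3) sender_payoff_eq_best_response[where br = br and h = h and p = p, OF assms(1,2)] by simp
qed

lemma payoff_deviation_event:
  assumes M: "prob_space M" and y_cube: "\<forall>p\<in>space M. in_cube (snd p)"
    and H_fin: "finite H" and H_cube: "\<forall>h\<in>H. \<forall>x. in_cube (h x)"
    and A_fin: "\<forall>i<N. finite (A i)" and br: "\<forall>i<N. \<forall>z. in_cube z \<longrightarrow> br i z \<in> A i"
    and u_range: "\<forall>a\<in>PiE {..<N} A. \<forall>z. in_cube z \<longrightarrow> 0 \<le> u a z \<and> u a z \<le> 1"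
    and measurable: "\<forall>h\<in>H. sender_payoff N A br u h \<in> borel_measurable M"
    and n: "n > 0" and \<delta>: "0 < \<delta>" "\<delta> \<le> 2"
  shows "\<exists>E\<in>sets (PiM {..<n} (\<lambda>_. M)). 1 - \<delta> \<le> measure (PiM {..<n} (\<lambda>_. M)) E \<and>
           (\<forall>S\<in>E. \<forall>h\<in>H. \<bar>integral\<^sup>L M (sender_payoff N A br u h) - emp_E n S (sender_payoff N A br u h)\<bar>
              \<le> sqrt (ln (2 * real (card H) / \<delta>) / (2 * real n)))"
proof -
  have "\<forall>h\<in>H. \<forall>p\<in>space M. 0 \<le> sender_payoff N A br u h p \<and> sender_payoff N A br u h p \<le> 1"
  proof (intro ballI)
    fix h p assume "h \<in> H" "p \<in> space M"
    then have "in_cube (h (fst p))" "in_cube (snd p)"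
      using H_cube y_cube by auto
    then show "0 \<le> sender_payoff N A br u h p \<and> sender_payoff N A br u h p \<le> 1"
      using A_fin br u_range by (intro sender_payoff_range) auto
  qed
  from uniform_emp_E_deviation[OF M H_fin measurable this zero_less_one n \<delta>] show ?thesis
    by simp
qed

lemma card_bias_index:
  assumes "finite H" "\<forall>i<N. finite (A i) \<and> card (A i) = m"
  shows "card (H \<times> (SIGMA i:{..<N}. A i \<times> (UNIV :: 'd::finite set))) = card H * N * CARD('d) * m"
proof -
  have "card (SIGMA i:{..<N}. A i \<times> (UNIV :: 'd set)) = (\<Sum>i<N. card (A i \<times> (UNIV :: 'd set)))"
    using assms by (intro card_SigmaI) auto
  then show ?thesis
    using assms by (simp add: card_cartesian_product)
qed

lemma bias_deviation_event:
  fixes M :: "('x \<times> (real^'d)) measure"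
    and H :: "('x \<Rightarrow> real^'d) set"
  assumes M: "prob_space M" and y_cube: "\<forall>p\<in>space M. in_cube (snd p)"
    and H_fin: "finite H" and H_cube: "\<forall>h\<in>H. \<forall>x. in_cube (h x)"
    and A_fin: "\<forall>i<N. finite (A i) \<and> card (A i) = m"
    and measurable: "\<forall>h\<in>H. \<forall>i<N. \<forall>a\<in>A i. \<forall>j. conditional_bias br i j a h \<in> borel_measurable M"
    and n: "n > 0" and \<delta>: "0 < \<delta>" "\<delta> \<le> 2"
  shows "\<exists>E\<in>sets (PiM {..<n} (\<lambda>_. M)). 1 - \<delta> \<le> measure (PiM {..<n} (\<lambda>_. M)) E \<and>
           (\<forall>S\<in>E. \<forall>h\<in>H. \<forall>i<N. \<forall>a\<in>A i. \<forall>j.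
              \<bar>integral\<^sup>L M (conditional_bias br i j a h) - emp_E n S (conditional_bias br i j a h)\<bar>
              \<le> sqrt (8 * ln (2 * real (card H) * real N * real CARD('d) * real m / \<delta>) / real n))"
proof -
  define K where "K = H \<times> (SIGMA i:{..<N}. A i \<times> (UNIV :: 'd set))"
  define bias :: "('x \<Rightarrow> real^'d) \<times> nat \<times> 'a \<times> 'd \<Rightarrow> 'x \<times> (real^'d) \<Rightarrow> real"
    where "bias = (\<lambda>(h, i, a, j). conditional_bias br i j a h)"
  have "finite K"
    unfolding K_def using H_fin A_fin by (intro finite_SigmaI) auto
  have measurable_bias: "\<forall>k\<in>K. bias k \<in> borel_measurable M"
    using measurable by (auto simp: K_def bias_def)
  have bias_range: "\<forall>k\<in>K. \<forall>p\<in>space M. -2 \<le> bias k p \<and> bias k p \<le> 2"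
  proof (intro ballI)
    fix k p assume "k \<in> K" "p \<in> space M"
    then obtain h i a j where "k = (h, i, a, j)" "h \<in> H"
      unfolding K_def by blast
    then have "\<bar>bias k p\<bar> \<le> 2"
      using H_cube y_cube \<open>p \<in> space M\<close> by (simp add: bias_def abs_conditional_bias_le)
    then show "-2 \<le> bias k p \<and> bias k p \<le> 2"
      by linarith
  qed
  obtain E where E: "E \<in> sets (PiM {..<n} (\<lambda>_. M))" "1 - \<delta> \<le> measure (PiM {..<n} (\<lambda>_. M)) E"
    "\<forall>S\<in>E. \<forall>k\<in>K. \<bar>integral\<^sup>L M (bias k) - emp_E n S (bias k)\<bar>
       \<le> (2 - -2) * sqrt (ln (2 * real (card K) / \<delta>) / (2 * real n))"
    using uniform_emp_E_deviation[OF M \<open>finite K\<close> measurable_bias bias_range _ n \<delta>] by force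
  have radius: "(2 - -2) * sqrt (x / (2 * real n)) = sqrt (8 * x / real n)" for x
  proof -
    have "sqrt (8 * x / real n) = sqrt (4\<^sup>2 * (x / (2 * real n)))"
      by simp
    also have "\<dots> = 4 * sqrt (x / (2 * real n))"
      unfolding real_sqrt_mult by simp
    finally show ?thesis
      by simp
  qed
  have card_K: "2 * real (card K) = 2 * real (card H) * real N * real CARD('d) * real m"
    unfolding K_def card_bias_index[OF H_fin A_fin] by simp
  have "\<bar>integral\<^sup>L M (conditional_bias br i j a h) - emp_E n S (conditional_bias br i j a h)\<bar>
      \<le> sqrt (8 * ln (2 * real (card K) / \<delta>) / real n)"
    if "S \<in> E" "h \<in> H" "i < N" "a \<in> A i" for S h i a j
  proof -
    have "(h, i, a, j) \<in> K"
      using that by (simp add: K_def)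
    with E(3) \<open>S \<in> E\<close> have "\<bar>integral\<^sup>L M (bias (h, i, a, j)) - emp_E n S (bias (h, i, a, j))\<bar>
        \<le> (2 - -2) * sqrt (ln (2 * real (card K) / \<delta>) / (2 * real n))"
      by blast
    then show ?thesis
      unfolding radius by (simp add: bias_def)
  qed
  then show ?thesis
    using E(1,2) unfolding card_K by blast
qed

lemma empirical_deviation_event:
  fixes M :: "('x \<times> (real^'d)) measure"
    and H :: "('x \<Rightarrow> real^'d) set"
  assumes M: "prob_space M" and y_cube: "\<forall>p\<in>space M. in_cube (snd p)"
    and H_fin: "finite H" and H_cube: "\<forall>h\<in>H. \<forall>x. in_cube (h x)"
    and A_fin: "\<forall>i<N. finite (A i) \<and> card (A i) = m"
    and br: "\<forall>i<N. \<forall>z. in_cube z \<longrightarrow> br i z \<in> A i"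
    and u_range: "\<forall>a\<in>PiE {..<N} A. \<forall>z. in_cube z \<longrightarrow> 0 \<le> u a z \<and> u a z \<le> 1"
    and measurable_payoff: "\<forall>h\<in>H. sender_payoff N A br u h \<in> borel_measurable M"
    and measurable_bias: "\<forall>h\<in>H. \<forall>i<N. \<forall>a\<in>A i. \<forall>j. conditional_bias br i j a h \<in> borel_measurable M"
    and n: "n > 0" and \<delta>: "0 < \<delta>" "\<delta> \<le> 4"
  shows "\<exists>E\<in>sets (PiM {..<n} (\<lambda>_. M)). 1 - \<delta> \<le> measure (PiM {..<n} (\<lambda>_. M)) E \<and>
           (\<forall>S\<in>E. (\<forall>h\<in>H.
               \<bar>integral\<^sup>L M (sender_payoff N A br u h) - emp_E n S (sender_payoff N A br u h)\<bar>
               \<le> sqrt (ln (4 * real (card H) / \<delta>) / (2 * real n))) \<and>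
             (\<forall>h\<in>H. \<forall>i<N. \<forall>a\<in>A i. \<forall>j.
               \<bar>integral\<^sup>L M (conditional_bias br i j a h) - emp_E n S (conditional_bias br i j a h)\<bar>
               \<le> sqrt (8 * ln (4 * real (card H) * real N * real CARD('d) * real m / \<delta>) / real n)))"
proof -
  have \<delta>_half: "0 < \<delta> / 2" "\<delta> / 2 \<le> 2"
    using \<delta> by auto
  have "\<forall>i<N. finite (A i)"
    using A_fin by blast
  from payoff_deviation_event[OF M y_cube H_fin H_cube this br u_range measurable_payoff n \<delta>_half]
  obtain E1 where E1: "E1 \<in> sets (PiM {..<n} (\<lambda>_. M))" "1 - \<delta> / 2 \<le> measure (PiM {..<n} (\<lambda>_. M)) E1"
    "\<forall>S\<in>E1. \<forall>h\<in>H. \<bar>integral\<^sup>L M (sender_payoff N A br u h) - emp_E n S (sender_payoff N A br u h)\<bar>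
       \<le> sqrt (ln (2 * real (card H) / (\<delta> / 2)) / (2 * real n))"
    by blast
  from bias_deviation_event[OF M y_cube H_fin H_cube A_fin measurable_bias n \<delta>_half]
  obtain E2 where E2: "E2 \<in> sets (PiM {..<n} (\<lambda>_. M))" "1 - \<delta> / 2 \<le> measure (PiM {..<n} (\<lambda>_. M)) E2"
    "\<forall>S\<in>E2. \<forall>h\<in>H. \<forall>i<N. \<forall>a\<in>A i. \<forall>j.
       \<bar>integral\<^sup>L M (conditional_bias br i j a h) - emp_E n S (conditional_bias br i j a h)\<bar>
       \<le> sqrt (8 * ln (2 * real (card H) * real N * real CARD('d) * real m / (\<delta> / 2)) / real n)"
    by blast
  have "2 * real (card H) / (\<delta> / 2) = 4 * real (card H) / \<delta>"
    "2 * real (card H) * real N * real CARD('d) * real m / (\<delta> / 2)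
      = 4 * real (card H) * real N * real CARD('d) * real m / \<delta>"
    by simp_all
  note payoff_dev = E1(3)[unfolded this] and bias_dev = E2(3)[unfolded this]
  have "1 - \<delta> \<le> measure (PiM {..<n} (\<lambda>_. M)) (E1 \<inter> E2)"
    using prob_space.prob_Int_ge[OF prob_space_PiM E1(1) E2(1)] M E1(2) E2(2) by fastforce
  moreover have "E1 \<inter> E2 \<in> sets (PiM {..<n} (\<lambda>_. M))"
    using E1(1) E2(1) by (rule sets.Int)
  ultimately show ?thesis
    using payoff_dev bias_dev by (intro bexI[of _ "E1 \<inter> E2"] conjI ballI) auto
qed

theorem lemma3:
  fixes M :: "('x \<times> (real^'d)) measure"
    and H :: "('x \<Rightarrow> real^'d) set"
    and N m n :: nat
    and A :: "nat \<Rightarrow> 'a set"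
    and v :: "nat \<Rightarrow> 'a \<Rightarrow> real^'d \<Rightarrow> real"
    and br :: "nat \<Rightarrow> real^'d \<Rightarrow> 'a"
    and u :: "(nat \<Rightarrow> 'a) \<Rightarrow> real^'d \<Rightarrow> real"
    and \<gamma> C \<delta> :: real
  assumes M: "prob_space M"
    and y_cube: "\<forall>p\<in>space M. in_cube (snd p)"
    and H_fin: "finite H"
    and H_cube: "\<forall>h\<in>H. \<forall>x. in_cube (h x)"
    and A_fin: "\<forall>i<N. finite (A i) \<and> card (A i) = m"
    and v_range: "\<forall>i<N. \<forall>a\<in>A i. \<forall>z. in_cube z \<longrightarrow> 0 \<le> v i a z \<and> v i a z \<le> 1"
    and br_argmax: "\<forall>i<N. \<forall>z. in_cube z \<longrightarrow>
                      br i z \<in> A i \<and> (\<forall>a'\<in>A i. v i a' z \<le> v i (br i z) z)"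
    and u_range: "\<forall>a\<in>PiE {..<N} A. \<forall>z. in_cube z \<longrightarrow> 0 \<le> u a z \<and> u a z \<le> 1"
    and \<gamma>: "\<gamma> \<ge> 0"
    and meas_obj: "\<forall>h\<in>H. (\<lambda>p. \<Sum>a\<in>PiE {..<N} A. u a (snd p) * bprof N br (h (fst p)) a)
                          \<in> borel_measurable M"
    and meas_con: "\<forall>h\<in>H. \<forall>i<N. \<forall>a\<in>A i. \<forall>j.
                     (\<lambda>p. (h (fst p) $ j - snd p $ j) * bi br i (h (fst p)) a) \<in> borel_measurable M"
    and n: "n > 0"
    and \<delta>: "0 < \<delta>" "\<delta> < 1"
  shows "\<exists>E \<in> sets (PiM {..<n} (\<lambda>_. M)).
           measure (PiM {..<n} (\<lambda>_. M)) E \<ge> 1 - \<delta> \<and>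
           (\<forall>S\<in>E. \<forall>f\<in>Delta H. \<forall>lam\<in>LambdaC N A C.
              \<bar>Lag (\<lambda>g. integral\<^sup>L M g) H N A br u \<gamma> f lam
               - Lag (emp_E n S) H N A br u \<gamma> f lam\<bar>
              \<le> sqrt (ln (4 * real (card H) / \<delta>) / (2 * real n))
                + C * sqrt (8 * ln (4 * real (card H) * real N * real CARD('d) * real m / \<delta>) / real n))"
proof -
  \<comment> \<open>Only the membership of best responses in A i matters.\<close>
  have br: "\<forall>i<N. \<forall>z. in_cube z \<longrightarrow> br i z \<in> A i"
    using br_argmax by blast
  have measurable: "\<forall>h\<in>H. sender_payoff N A br u h \<in> borel_measurable M"
    "\<forall>h\<in>H. \<forall>i<N. \<forall>a\<in>A i. \<forall>j. conditional_bias br i j a h \<in> borel_measurable M"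
    using meas_obj meas_con by (simp_all add: sender_payoff_def conditional_bias_def)
  have "\<delta> \<le> 4"
    using \<delta> by simp
  from empirical_deviation_event[OF M y_cube H_fin H_cube A_fin br u_range measurable n \<delta>(1) this]
  obtain E where E: "E \<in> sets (PiM {..<n} (\<lambda>_. M))" "1 - \<delta> \<le> measure (PiM {..<n} (\<lambda>_. M)) E"
    "\<forall>S\<in>E. (\<forall>h\<in>H.
        \<bar>integral\<^sup>L M (sender_payoff N A br u h) - emp_E n S (sender_payoff N A br u h)\<bar>
        \<le> sqrt (ln (4 * real (card H) / \<delta>) / (2 * real n))) \<and>
      (\<forall>h\<in>H. \<forall>i<N. \<forall>a\<in>A i. \<forall>j.
        \<bar>integral\<^sup>L M (conditional_bias br i j a h) - emp_E n S (conditional_bias br i j a h)\<bar>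
        \<le> sqrt (8 * ln (4 * real (card H) * real N * real CARD('d) * real m / \<delta>) / real n))"
    by blast
  have radius_nonneg: "0 \<le> sqrt (8 * ln (4 * real (card H) * real N * real CARD('d) * real m / \<delta>) / real n)"
    using ln_mult_of_nat_div_nonneg[of \<delta> 4 "card H * N * CARD('d) * m"] \<delta> by (simp add: mult.assoc)
  show ?thesis
    using E by (intro bexI[of _ E] conjI ballI Lag_diff_le[OF _ _ radius_nonneg]) auto
qed

end
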